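(* Let $G=(V,E)$ be an undirected graph with layers $L_0, L_1, L_2, L_{\geq 2}$ and quantities $d^+, d^-, rs$ as in the context, and let $0<\varepsilon<1$. Let $\bar\ell_{\geq 2}$ be the output of the procedure Estimate-Periphery-Size (see context) run with $$s_1 = \Theta\!\left(\frac{d^+_{\max}(L_1)}{\varepsilon^2\, d^+_{avg}(L_1)}\right), \qquad s_{\geq 2} = \Theta\!\left(\frac{c_{rs}\cdot d^-_{\max}(L_{\geq 2})}{\varepsilon^2\, d^-_{avg}(L_{\geq 2})}\right).$$ Then with high constant probability, $\bar\ell_{\geq 2} \in [(1-\varepsilon)|L_{\geq 2}|, (1+\varepsilon)|L_{\geq 2}|]$.
   Context: Given $L_0 \subseteq V$, let $L_1 = \bigcup_{v\in L_0}N(v)\setminus L_0$, $L_2$ the set of nodes at distance exactly $2$ from $L_0$, and $L_{\geq 2} = V\setminus(L_0\cup L_1)$. For $v\in L_1$, $d^+(v)$ is its number of neighbors in $L_2$; for $v\in L_2$, $d^-(v)$ is its number of neighbors in $L_1$; for $v\in L_{\geq 2}\setminus L_2$, $d^-(v)=0$. For a set $R$: $d^+_{avg}(R) = \frac{1}{|R|}\sum_{v\in R}d^+(v)$, $d^+_{\max}(R)=\max_{v\in R}d^+(v)$, and analogously $d^-_{avg}(R)$, $d^-_{\max}(R)$. Each $v\in L_{\geq 2}$ has a reachability score $rs(v)>0$, and the procedure Reach returns a node of $L_{\geq 2}$ (together with its score) such that each $v\in L_{\geq 2}$ is returned with probability $rs(v)/\sum_{u\in L_{\geq 2}}rs(u)$,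 independently across calls. Let $rs_{avg}(L_{\geq 2}) = \frac{1}{|L_{\geq 2}|}\sum_{v\in L_{\geq 2}}rs(v)$, $rs_{\min}(L_{\geq 2}) = \min_{v\in L_{\geq 2}}rs(v)$, and $c_{rs} = rs_{avg}(L_{\geq 2})/rs_{\min}(L_{\geq 2})$. Estimate-Periphery-Size: draw $s_1$ uniform independent nodes $S_1$ from $L_1$ and set $\bar d^+ = \frac{1}{s_1}\sum_{v\in S_1}d^+(v)$; draw $s_{\geq 2}$ nodes $S_2$ by independent calls to Reach and set $\bar d^- = \left(\sum_{v\in S_2}\frac{d^-(v)}{rs(v)}\right)\big/\left(\sum_{v\in S_2}\frac{1}{rs(v)}\right)$; output $\bar\ell_{\geq 2} = |L_1|\cdot \bar d^+/\bar d^-$. "With high constant probability" means with probability at least a fixed constant close to $1$ (determined by the hidden constants in $\Theta$). *)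

theory Defs
  imports "HOL-Probability.Probability"
begin

definition nbr :: "'a set \<Rightarrow> ('a \<Rightarrow> 'a \<Rightarrow> bool) \<Rightarrow> 'a \<Rightarrow> 'a set" where
  "nbr V E v = {u \<in> V. E v u}"

definition layer1 :: "'a set \<Rightarrow> ('a \<Rightarrow> 'a \<Rightarrow> bool) \<Rightarrow> 'a set \<Rightarrow> 'a set" where
  "layer1 V E L0 = (\<Union>v\<in>L0. nbr V E v) - L0"

definition layer2 :: "'a set \<Rightarrow> ('a \<Rightarrow> 'a \<Rightarrow> bool) \<Rightarrow> 'a set \<Rightarrow> 'a set" where
  "layer2 V E L0 = {v \<in> V - L0 - layer1 V E L0. \<exists>u\<in>layer1 V E L0. E u v}"

definition layer_ge2 :: "'a set \<Rightarrow> ('a \<Rightarrow> 'a \<Rightarrow> bool) \<Rightarrow> 'a set \<Rightarrow> 'a set" where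
  "layer_ge2 V E L0 = V - (L0 \<union> layer1 V E L0)"

definition dplus :: "'a set \<Rightarrow> ('a \<Rightarrow> 'a \<Rightarrow> bool) \<Rightarrow> 'a set \<Rightarrow> 'a \<Rightarrow> nat" where
  "dplus V E L0 v = card {u \<in> layer2 V E L0. E v u}"

text \<open>d^-(v): number of neighbours in L1 (used for v in L_{>=2}; it is 0 outside L2).\<close>
definition dminus :: "'a set \<Rightarrow> ('a \<Rightarrow> 'a \<Rightarrow> bool) \<Rightarrow> 'a set \<Rightarrow> 'a \<Rightarrow> nat" where
  "dminus V E L0 v = card {u \<in> layer1 V E L0. E v u}"

definition avg_of :: "('a \<Rightarrow> real) \<Rightarrow> 'a set \<Rightarrow> real" where
  "avg_of f R = (\<Sum>v\<in>R. f v) / real (card R)"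

definition max_of :: "('a \<Rightarrow> real) \<Rightarrow> 'a set \<Rightarrow> real" where
  "max_of f R = Max (f ` R)"

definition min_of :: "('a \<Rightarrow> real) \<Rightarrow> 'a set \<Rightarrow> real" where
  "min_of f R = Min (f ` R)"

primrec iid_pmf :: "nat \<Rightarrow> 'a pmf \<Rightarrow> 'a list pmf" where
  "iid_pmf 0 p = return_pmf []"
| "iid_pmf (Suc n) p = bind_pmf p (\<lambda>x. map_pmf (\<lambda>xs. x # xs) (iid_pmf n p))"

text \<open>Output of Estimate-Periphery-Size given the samples S1 (from L1) and S2 (from Reach).\<close>
definition periphery_estimate ::
  "'a set \<Rightarrow> ('a \<Rightarrow> 'a \<Rightarrow> bool) \<Rightarrow> 'a set \<Rightarrow> ('a \<Rightarrow> real) \<Rightarrow> 'a list \<Rightarrow> 'a list \<Rightarrow> real" where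
  "periphery_estimate V E L0 rs S1 S2 =
     (let dp = (\<Sum>v\<leftarrow>S1. real (dplus V E L0 v)) / real (length S1);
          dm = (\<Sum>v\<leftarrow>S2. real (dminus V E L0 v) / rs v) / (\<Sum>v\<leftarrow>S2. 1 / rs v)
      in real (card (layer1 V E L0)) * dp / dm)"

end

theory Submission
  imports Defs
begin

text \<open>
  Counting the edges between L1 and L2 from both ends gives
  |L1| d+avg(L1) = (sum of d- over L>=2) = |L>=2| d-avg(L>=2), so the estimate is accurate as soon as
  its three empirical sums are. The first is a plain sample of d+ over L1. Under Reach, with R the
  total score, the importance weights make d-(v)/rs(v) and 1/rs(v) unbiased for (sum of d-)/R and
  |L>=2|/R, whose ratio is d-avg(L>=2). A nonnegative variable bounded by M with mean mu has second
  moment at most (M/mu) mu^2, so by Chebyshev a sample of size C (M/mu)/eps^2 has relative error below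
  eps/5 with probability at least 1 - 25/C. Here M/mu is max/avg for d+ and at most
  c_rs max/avg for both weighted variables, and three relative errors of eps/5 compound to at most eps.
\<close>

section \<open>Independent samples\<close>

lemma expectation_bind_pmf_finite:
  fixes f :: "'b \<Rightarrow> real"
  assumes M: "finite (set_pmf M)" and N: "\<And>x. x \<in> set_pmf M \<Longrightarrow> finite (set_pmf (N x))"
  shows "measure_pmf.expectation (bind_pmf M N) f
         = measure_pmf.expectation M (\<lambda>x. measure_pmf.expectation (N x) f)"
proof -
  define B where "B = (\<Union>x\<in>set_pmf M. set_pmf (N x))"
  have B: "finite B"
    unfolding B_def using M N by blast
  have "measure_pmf.expectation (bind_pmf M N) f = (\<Sum>y\<in>B. f y * pmf (bind_pmf M N) y)"
    by (rule integral_measure_pmf_real[OF B]) (auto simp: B_def)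
  also have "\<dots> = (\<Sum>y\<in>B. f y * (\<Sum>x\<in>set_pmf M. pmf (N x) y * pmf M x))"
    by (simp add: pmf_bind integral_measure_pmf_real[OF M])
  also have "\<dots> = (\<Sum>x\<in>set_pmf M. (\<Sum>y\<in>B. f y * pmf (N x) y) * pmf M x)"
    by (simp add: sum_distrib_left sum_distrib_right mult_ac sum.swap[of _ B])
  also have "\<dots> = (\<Sum>x\<in>set_pmf M. measure_pmf.expectation (N x) f * pmf M x)"
    by (intro sum.cong refl, subst integral_measure_pmf_real[OF B]) (auto simp: B_def)
  also have "\<dots> = measure_pmf.expectation M (\<lambda>x. measure_pmf.expectation (N x) f)"
    by (rule integral_measure_pmf_real[symmetric]) (auto simp: M)
  finally show ?thesis .
qed

lemma set_pmf_iid_pmf: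
  "xs \<in> set_pmf (iid_pmf n p) \<Longrightarrow> length xs = n \<and> set xs \<subseteq> set_pmf p"
  by (induction n arbitrary: xs) fastforce+

lemma finite_set_pmf_iid_pmf:
  assumes "finite (set_pmf p)"
  shows "finite (set_pmf (iid_pmf n p))"
proof (rule finite_subset)
  show "set_pmf (iid_pmf n p) \<subseteq> {xs. set xs \<subseteq> set_pmf p \<and> length xs = n}"
    using set_pmf_iid_pmf by blast
  show "finite {xs. set xs \<subseteq> set_pmf p \<and> length xs = n}"
    using finite_lists_length_eq[OF assms] .
qed

lemma expectation_iid_pmf_Suc:
  fixes g :: "'a list \<Rightarrow> real"
  assumes "finite (set_pmf p)"
  shows "measure_pmf.expectation (iid_pmf (Suc n) p) g
       = measure_pmf.expectation p (\<lambda>x. measure_pmf.expectation (iid_pmf n p) (\<lambda>xs. g (x # xs)))"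
  using assms by (simp add: expectation_bind_pmf_finite finite_set_pmf_iid_pmf)

lemma expectation_iid_pmf_sum_list:
  fixes f :: "'a \<Rightarrow> real"
  assumes p: "finite (set_pmf p)"
  shows "measure_pmf.expectation (iid_pmf n p) (\<lambda>xs. \<Sum>v\<leftarrow>xs. f v)
       = real n * measure_pmf.expectation p f"
proof (induction n)
  case (Suc n)
  have "measure_pmf.expectation (iid_pmf n p) (\<lambda>xs. f x + (\<Sum>v\<leftarrow>xs. f v))
      = f x + real n * measure_pmf.expectation p f" for x
    by (simp add: integrable_measure_pmf_finite finite_set_pmf_iid_pmf p Suc)
  then show ?case
    by (subst expectation_iid_pmf_Suc[OF p])
      (simp add: integrable_measure_pmf_finite p algebra_simps)
qed simp

lemma expectation_iid_pmf_sum_list_deviation: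
  fixes f :: "'a \<Rightarrow> real"
  assumes p: "finite (set_pmf p)"
  defines "\<mu> \<equiv> measure_pmf.expectation p f"
  shows "measure_pmf.expectation (iid_pmf n p) (\<lambda>xs. ((\<Sum>v\<leftarrow>xs. f v) - real n * \<mu>)\<^sup>2)
       = real n * measure_pmf.expectation p (\<lambda>x. (f x - \<mu>)\<^sup>2)"
proof (induction n)
  case (Suc n)
  let ?dev = "\<lambda>xs. (\<Sum>v\<leftarrow>xs. f v) - real n * \<mu>"
  have int: "integrable (measure_pmf (iid_pmf n p)) h" "integrable (measure_pmf p) g"
    for h :: "'a list \<Rightarrow> real" and g :: "'a \<Rightarrow> real"
    by (simp_all add: integrable_measure_pmf_finite finite_set_pmf_iid_pmf p)
  have centered: "measure_pmf.expectation (iid_pmf n p) ?dev = 0"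
    using expectation_iid_pmf_sum_list[OF p, of n f] by (simp add: int \<mu>_def)
  have square_expand: "((\<Sum>v\<leftarrow>x # xs. f v) - real (Suc n) * \<mu>)\<^sup>2
      = (f x - \<mu>)\<^sup>2 + 2 * (f x - \<mu>) * ?dev xs + (?dev xs)\<^sup>2" for x xs
    by (simp add: power2_eq_square algebra_simps)
  have "measure_pmf.expectation (iid_pmf n p) (\<lambda>xs. ((\<Sum>v\<leftarrow>x # xs. f v) - real (Suc n) * \<mu>)\<^sup>2)
      = (f x - \<mu>)\<^sup>2 + real n * measure_pmf.expectation p (\<lambda>x. (f x - \<mu>)\<^sup>2)" for x
    unfolding square_expand using centered by (simp add: int Suc)
  then show ?case
    by (subst expectation_iid_pmf_Suc[OF p]) (simp add: int algebra_simps)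
qed simp

lemma variance_iid_pmf_sum_list:
  fixes f :: "'a \<Rightarrow> real"
  assumes "finite (set_pmf p)"
  shows "measure_pmf.variance (iid_pmf n p) (\<lambda>xs. \<Sum>v\<leftarrow>xs. f v) = real n * measure_pmf.variance p f"
  using expectation_iid_pmf_sum_list_deviation[OF assms] expectation_iid_pmf_sum_list[OF assms]
  by simp

definition accurate_sample :: "('a \<Rightarrow> real) \<Rightarrow> real \<Rightarrow> real \<Rightarrow> nat \<Rightarrow> 'a list set" where
  "accurate_sample f \<mu> \<eta> n =
     {xs. length xs = n \<and> \<bar>(\<Sum>v\<leftarrow>xs. f v) - real n * \<mu>\<bar> < \<eta> * (real n * \<mu>)}"

lemma accurate_sample_pos: "xs \<in> accurate_sample f \<mu> \<eta> n \<Longrightarrow> 0 < \<eta> * (real n * \<mu>)"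
  unfolding accurate_sample_def by (auto intro: le_less_trans[OF abs_ge_zero])

lemma prob_accurate_sample_ge:
  fixes f :: "'a \<Rightarrow> real"
  assumes p: "finite (set_pmf p)" and \<mu>: "measure_pmf.expectation p f = \<mu>" "\<mu> > 0"
    and \<eta>: "\<eta> > 0" and n: "n > 0"
  shows "measure_pmf.prob (iid_pmf n p) (accurate_sample f \<mu> \<eta> n)
       \<ge> 1 - measure_pmf.expectation p (\<lambda>x. (f x)\<^sup>2) / (real n * \<eta>\<^sup>2 * \<mu>\<^sup>2)"
proof -
  let ?Q = "iid_pmf n p" and ?S = "\<lambda>xs. \<Sum>v\<leftarrow>xs. f v"
  let ?bad = "{xs. \<eta> * (real n * \<mu>) \<le> \<bar>?S xs - measure_pmf.expectation ?Q ?S\<bar>}"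
  have int: "integrable (measure_pmf ?Q) h" "integrable (measure_pmf p) g"
    for h :: "'a list \<Rightarrow> real" and g :: "'a \<Rightarrow> real"
    by (simp_all add: integrable_measure_pmf_finite finite_set_pmf_iid_pmf p)
  have mean: "measure_pmf.expectation ?Q ?S = real n * \<mu>"
    using expectation_iid_pmf_sum_list[OF p] \<mu> by simp
  have "measure_pmf.prob ?Q (UNIV - accurate_sample f \<mu> \<eta> n)
      = measure_pmf.prob ?Q ((UNIV - accurate_sample f \<mu> \<eta> n) \<inter> set_pmf ?Q)"
    by (simp add: measure_Int_set_pmf)
  also have "\<dots> \<le> measure_pmf.prob ?Q ?bad"
    using set_pmf_iid_pmf
    by (intro measure_pmf.finite_measure_mono) (auto simp: accurate_sample_def mean)
  also have "\<dots> \<le> measure_pmf.variance ?Q ?S / (\<eta> * (real n * \<mu>))\<^sup>2"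
    using measure_pmf.Chebyshev_inequality[where f = ?S and a = "\<eta> * (real n * \<mu>)"] \<mu> \<eta> n by (simp add: int)
  also have "measure_pmf.variance ?Q ?S
      = real n * (measure_pmf.expectation p (\<lambda>x. (f x)\<^sup>2) - \<mu>\<^sup>2)"
    using variance_iid_pmf_sum_list[OF p] measure_pmf.variance_eq[of p f] \<mu>(1) by (simp add: int)
  also have "real n * (measure_pmf.expectation p (\<lambda>x. (f x)\<^sup>2) - \<mu>\<^sup>2) / (\<eta> * (real n * \<mu>))\<^sup>2
      \<le> real n * measure_pmf.expectation p (\<lambda>x. (f x)\<^sup>2) / (\<eta> * (real n * \<mu>))\<^sup>2"
    by (intro divide_right_mono) (auto simp: algebra_simps)
  also have "\<dots> = measure_pmf.expectation p (\<lambda>x. (f x)\<^sup>2) / (real n * \<eta>\<^sup>2 * \<mu>\<^sup>2)"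
    using n by (simp add: power2_eq_square field_simps)
  finally show ?thesis
    using measure_pmf.prob_compl[of "accurate_sample f \<mu> \<eta> n" ?Q] by (simp add: Compl_eq_Diff_UNIV)
qed

lemma expectation_square_le:
  fixes f :: "'a \<Rightarrow> real"
  assumes p: "finite (set_pmf p)" and f: "\<And>x. x \<in> set_pmf p \<Longrightarrow> 0 \<le> f x \<and> f x \<le> M"
  shows "measure_pmf.expectation p (\<lambda>x. (f x)\<^sup>2) \<le> M * measure_pmf.expectation p f"
proof -
  have "measure_pmf.expectation p (\<lambda>x. (f x)\<^sup>2) \<le> measure_pmf.expectation p (\<lambda>x. M * f x)"
    using f by (intro integral_mono_AE)
      (auto simp: integrable_measure_pmf_finite p AE_measure_pmf_iff power2_eq_square
            intro: mult_right_mono)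
  then show ?thesis by simp
qed

lemma prob_accurate_sample_ge_bounded:
  fixes f :: "'a \<Rightarrow> real"
  assumes p: "finite (set_pmf p)" and \<mu>: "measure_pmf.expectation p f = \<mu>" "\<mu> > 0"
    and f: "\<And>x. x \<in> set_pmf p \<Longrightarrow> 0 \<le> f x \<and> f x \<le> M"
    and pos: "\<eta> > 0" "C > 0" and n: "real n \<ge> C * (M / \<mu>) / \<eta>\<^sup>2"
  shows "measure_pmf.prob (iid_pmf n p) (accurate_sample f \<mu> \<eta> n) \<ge> 1 - 1 / C"
proof -
  have "measure_pmf.expectation p f \<le> M"
    using f by (intro measure_pmf.integral_le_const)
      (auto simp: integrable_measure_pmf_finite p AE_measure_pmf_iff)
  then have "C * (M / \<mu>) / \<eta>\<^sup>2 > 0" using \<mu> pos by simp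
  then have n_pos: "real n > 0" using n by linarith
  have "measure_pmf.expectation p (\<lambda>x. (f x)\<^sup>2) \<le> M * \<mu>"
    using expectation_square_le[OF p, of f M] f \<mu>(1) by blast
  then have "measure_pmf.expectation p (\<lambda>x. (f x)\<^sup>2) / (real n * \<eta>\<^sup>2 * \<mu>\<^sup>2)
      \<le> M * \<mu> / (real n * \<eta>\<^sup>2 * \<mu>\<^sup>2)"
    using n_pos pos \<mu> by (intro divide_right_mono) auto
  also have "\<dots> = M / \<mu> / (real n * \<eta>\<^sup>2)"
    using \<mu> by (simp add: power2_eq_square field_simps)
  also have "\<dots> \<le> 1 / C"
    using n n_pos pos \<mu> by (simp add: field_simps)
  finally show ?thesis
    using prob_accurate_sample_ge[OF p \<mu> pos(1), of n] n_pos by simp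
qed

(* Unlike measure_pmf_prob_product, no countability is needed: intersect with the supports first. *)
lemma prob_pair_pmf_Times:
  "measure_pmf.prob (pair_pmf p q) (A \<times> B) = measure_pmf.prob p A * measure_pmf.prob q B"
proof -
  have "(A \<times> B) \<inter> set_pmf (pair_pmf p q) = (A \<inter> set_pmf p) \<times> (B \<inter> set_pmf q)"
    by auto
  then have "measure_pmf.prob (pair_pmf p q) (A \<times> B)
      = measure_pmf.prob (pair_pmf p q) ((A \<inter> set_pmf p) \<times> (B \<inter> set_pmf q))"
    by (metis measure_Int_set_pmf)
  also have "\<dots> = measure_pmf.prob p A * measure_pmf.prob q B"
    by (simp add: measure_pmf_prob_product measure_Int_set_pmf)
  finally show ?thesis .
qed

lemma prob_Int_ge:
  "measure_pmf.prob p (A \<inter> B) \<ge> measure_pmf.prob p A + measure_pmf.prob p B - 1"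
proof -
  have "measure_pmf.prob p A + measure_pmf.prob p B
      = measure_pmf.prob p (A \<union> B) + measure_pmf.prob p (A \<inter> B)"
    by (simp add: measure_Un3 measure_pmf.fmeasurable_eq_sets)
  then show ?thesis using measure_pmf.prob_le_1[of p "A \<union> B"] by linarith
qed

lemma prob_pair_pmf_Times_ge:
  "measure_pmf.prob (pair_pmf p q) (A \<times> B) \<ge> measure_pmf.prob p A + measure_pmf.prob q B - 1"
proof -
  have "0 \<le> (1 - measure_pmf.prob p A) * (1 - measure_pmf.prob q B)"
    by (simp add: measure_pmf.prob_le_1)
  then show ?thesis
    by (simp add: prob_pair_pmf_Times algebra_simps)
qed

section \<open>Relative errors\<close>

lemma fifth_margin_bounds:
  fixes \<epsilon> :: real
  assumes "0 < \<epsilon>" "\<epsilon> < 1"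
  shows "(1 + \<epsilon> / 5)\<^sup>2 \<le> (1 + \<epsilon>) * (1 - \<epsilon> / 5)"
    and "(1 - \<epsilon>) * (1 + \<epsilon> / 5) \<le> (1 - \<epsilon> / 5)\<^sup>2"
proof -
  have "\<epsilon> * \<epsilon> < \<epsilon>" "0 < \<epsilon> * \<epsilon>" using assms by simp_all
  moreover have "(1 + \<epsilon>) * (1 - \<epsilon> / 5) - (1 + \<epsilon> / 5)\<^sup>2 = 2 / 5 * \<epsilon> - 6 / 25 * (\<epsilon> * \<epsilon>)"
    "(1 - \<epsilon> / 5)\<^sup>2 - (1 - \<epsilon>) * (1 + \<epsilon> / 5) = 2 / 5 * \<epsilon> + 6 / 25 * (\<epsilon> * \<epsilon>)"
    by (simp_all add: power2_eq_square field_simps)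
  ultimately show "(1 + \<epsilon> / 5)\<^sup>2 \<le> (1 + \<epsilon>) * (1 - \<epsilon> / 5)"
    and "(1 - \<epsilon>) * (1 + \<epsilon> / 5) \<le> (1 - \<epsilon> / 5)\<^sup>2"
    using assms by linarith+
qed

lemma mult_divide_relative_error:
  fixes x y z x0 y0 z0 \<epsilon> :: real
  assumes \<epsilon>: "0 < \<epsilon>" "\<epsilon> < 1" and pos: "0 < x0" "0 < y0" "0 < z0"
    and x: "\<bar>x - x0\<bar> < \<epsilon> / 5 * x0" and y: "\<bar>y - y0\<bar> < \<epsilon> / 5 * y0"
    and z: "\<bar>z - z0\<bar> < \<epsilon> / 5 * z0"
  shows "(1 - \<epsilon>) * (x0 * z0 / y0) \<le> x * z / y \<and> x * z / y \<le> (1 + \<epsilon>) * (x0 * z0 / y0)"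
proof -
  define h where "h = \<epsilon> / 5"
  have h: "0 < h" "h < 1 / 5" using \<epsilon> by (auto simp: h_def)
  note coeff = fifth_margin_bounds[OF \<epsilon>, folded h_def]
  have xb: "(1 - h) * x0 \<le> x" "x \<le> (1 + h) * x0"
    using x[unfolded abs_less_iff] by (auto simp: h_def algebra_simps)
  have yb: "(1 - h) * y0 \<le> y" "y \<le> (1 + h) * y0"
    using y[unfolded abs_less_iff] by (auto simp: h_def algebra_simps)
  have zb: "(1 - h) * z0 \<le> z" "z \<le> (1 + h) * z0"
    using z[unfolded abs_less_iff] by (auto simp: h_def algebra_simps)
  have "0 < (1 - h) * x0" "0 < (1 - h) * y0" "0 < (1 - h) * z0" using h pos by simp_all
  then have x_pos: "0 < x" and y_pos: "0 < y" and z_pos: "0 < z" using xb yb zb by linarith+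
  have y_ratio: "1 - h \<le> y / y0" "y / y0 \<le> 1 + h"
    using yb pos by (simp_all add: field_simps)
  have "x * z \<le> ((1 + h) * x0) * ((1 + h) * z0)"
    using xb zb x_pos z_pos h by (intro mult_mono) auto
  also have "\<dots> = (1 + h)\<^sup>2 * (x0 * z0)" by (simp add: power2_eq_square algebra_simps)
  also have "\<dots> \<le> (1 + \<epsilon>) * (1 - h) * (x0 * z0)"
    using coeff pos by (intro mult_right_mono) auto
  also have "\<dots> \<le> (1 + \<epsilon>) * (y / y0) * (x0 * z0)"
    using y_ratio \<epsilon> pos by (intro mult_right_mono mult_left_mono) auto
  also have "\<dots> = (1 + \<epsilon>) * (x0 * z0 / y0) * y" by simp
  finally have upper: "x * z / y \<le> (1 + \<epsilon>) * (x0 * z0 / y0)"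
    using y_pos by (simp add: divide_le_eq)
  have "(1 - \<epsilon>) * (x0 * z0 / y0) * y = (1 - \<epsilon>) * (y / y0) * (x0 * z0)" by simp
  also have "\<dots> \<le> (1 - \<epsilon>) * (1 + h) * (x0 * z0)"
    using y_ratio \<epsilon> pos by (intro mult_right_mono mult_left_mono) auto
  also have "\<dots> \<le> (1 - h)\<^sup>2 * (x0 * z0)"
    using coeff pos by (intro mult_right_mono) auto
  also have "\<dots> = ((1 - h) * x0) * ((1 - h) * z0)" by (simp add: power2_eq_square algebra_simps)
  also have "\<dots> \<le> x * z"
    using xb zb x_pos h pos by (intro mult_mono) auto
  finally have lower: "(1 - \<epsilon>) * (x0 * z0 / y0) \<le> x * z / y"
    using y_pos by (simp add: le_divide_eq)
  show ?thesis using lower upper ..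
qed

section \<open>Degrees between the layers\<close>

lemma sum_card_filter_swap:
  assumes "finite A" "finite B"
  shows "(\<Sum>a\<in>A. card {b\<in>B. P a b}) = (\<Sum>b\<in>B. card {a\<in>A. P a b})"
proof -
  have card_filter: "card {x\<in>X. Q x} = (\<Sum>x\<in>X. of_bool (Q x))" if "finite X" for X and Q :: "_ \<Rightarrow> bool"
    using that by (simp add: Collect_conj_eq Int_commute)
  have "(\<Sum>a\<in>A. card {b\<in>B. P a b}) = (\<Sum>a\<in>A. \<Sum>b\<in>B. of_bool (P a b))"
    using assms(2) by (simp only: card_filter)
  also have "\<dots> = (\<Sum>b\<in>B. \<Sum>a\<in>A. of_bool (P a b))"
    by (rule sum.swap)
  also have "\<dots> = (\<Sum>b\<in>B. card {a\<in>A. P a b})"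
    using assms(1) by (simp only: card_filter)
  finally show ?thesis .
qed

lemma layer2_subset_layer_ge2: "layer2 V E L0 \<subseteq> layer_ge2 V E L0"
  unfolding layer2_def layer_ge2_def by auto

lemma finite_layer1: "finite V \<Longrightarrow> finite (layer1 V E L0)"
  unfolding layer1_def nbr_def by (auto intro: finite_subset)

lemma finite_layer_ge2: "finite V \<Longrightarrow> finite (layer_ge2 V E L0)"
  unfolding layer_ge2_def by simp

lemma sum_dplus_eq_sum_dminus:
  assumes "finite V" and sym: "\<And>u v. E u v \<Longrightarrow> E v u"
  shows "(\<Sum>v\<in>layer1 V E L0. dplus V E L0 v) = (\<Sum>v\<in>layer_ge2 V E L0. dminus V E L0 v)"
proof -
  let ?L1 = "layer1 V E L0" and ?L = "layer_ge2 V E L0"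
  have "{u \<in> layer2 V E L0. E v u} = {u \<in> ?L. E v u}" if "v \<in> ?L1" for v
    using that unfolding layer2_def layer_ge2_def by auto
  then have "(\<Sum>v\<in>?L1. dplus V E L0 v) = (\<Sum>v\<in>?L1. card {u \<in> ?L. E v u})"
    unfolding dplus_def by simp
  also have "\<dots> = (\<Sum>u\<in>?L. card {v \<in> ?L1. E v u})"
    using assms by (intro sum_card_filter_swap finite_layer1 finite_layer_ge2)
  also have "\<dots> = (\<Sum>u\<in>?L. dminus V E L0 u)"
    unfolding dminus_def using sym by (intro sum.cong refl arg_cong[where f = card]) blast
  finally show ?thesis .
qed

lemma dminus_pos:
  assumes "finite V" and sym: "\<And>u v. E u v \<Longrightarrow> E v u" and "v \<in> layer2 V E L0"
  shows "dminus V E L0 v > 0"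
proof -
  obtain u where "u \<in> layer1 V E L0" "E v u"
    using assms(3) sym unfolding layer2_def by blast
  then show ?thesis
    unfolding dminus_def using finite_layer1[OF assms(1)] by (auto simp: card_gt_0_iff)
qed

section \<open>Accuracy of Estimate-Periphery-Size\<close>

lemma max_of_ge: "finite R \<Longrightarrow> v \<in> R \<Longrightarrow> f v \<le> max_of f R"
  unfolding max_of_def by simp

lemma min_of_le: "finite R \<Longrightarrow> v \<in> R \<Longrightarrow> min_of f R \<le> f v"
  unfolding min_of_def by simp

lemma min_of_pos:
  assumes "finite R" "R \<noteq> {}" "\<And>v. v \<in> R \<Longrightarrow> 0 < f v"
  shows "0 < min_of f R"
  using assms Min_in[of "f ` R"] unfolding min_of_def by auto

lemma set_pmf_subset_if_sum_pmf_eq_1: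
  assumes "finite A" "(\<Sum>x\<in>A. pmf p x) = 1"
  shows "set_pmf p \<subseteq> A"
proof -
  have "measure_pmf.prob p A = 1"
    using assms by (simp add: measure_measure_pmf_finite)
  then show ?thesis
    by (simp add: measure_pmf.prob_eq_1 AE_measure_pmf_iff subset_iff)
qed

locale periphery_sampling =
  fixes V :: "'a set" and E :: "'a \<Rightarrow> 'a \<Rightarrow> bool" and L0 :: "'a set"
    and rs :: "'a \<Rightarrow> real" and Reach :: "'a pmf"
  assumes finite_V: "finite V"
    and sym: "\<And>u v. E u v \<Longrightarrow> E v u"
    and layer2_nonempty: "layer2 V E L0 \<noteq> {}"
    and rs_pos: "\<And>v. v \<in> layer_ge2 V E L0 \<Longrightarrow> rs v > 0"
    and pmf_Reach: "\<And>v. v \<in> layer_ge2 V E L0 \<Longrightarrow>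
                      pmf Reach v = rs v / (\<Sum>u\<in>layer_ge2 V E L0. rs u)"
begin

abbreviation "L1 \<equiv> layer1 V E L0"
abbreviation "L \<equiv> layer_ge2 V E L0"
abbreviation "dp v \<equiv> real (dplus V E L0 v)"
abbreviation "dm v \<equiv> real (dminus V E L0 v)"
abbreviation "cross_edges \<equiv> \<Sum>v\<in>L. dm v"
abbreviation "rs_total \<equiv> \<Sum>v\<in>L. rs v"

lemma finite_L1: "finite L1"
  using finite_layer1[OF finite_V] .

lemma finite_L: "finite L"
  using finite_layer_ge2[OF finite_V] .

lemma L_nonempty: "L \<noteq> {}"
  using layer2_nonempty layer2_subset_layer_ge2[of V E L0] by blast

lemma sum_dp_eq_cross_edges: "(\<Sum>v\<in>L1. dp v) = cross_edges"
  using sum_dplus_eq_sum_dminus[OF finite_V sym] by (simp flip: of_nat_sum)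

lemma cross_edges_pos: "cross_edges > 0"
proof -
  obtain w where w: "w \<in> layer2 V E L0" using layer2_nonempty by blast
  have "0 < dm w" using dminus_pos[OF finite_V sym w] by simp
  also have "\<dots> \<le> cross_edges"
    using w layer2_subset_layer_ge2[of V E L0] finite_L by (intro member_le_sum) auto
  finally show ?thesis .
qed

lemma L1_nonempty: "L1 \<noteq> {}"
proof
  assume "L1 = {}"
  then show False using cross_edges_pos sum_dp_eq_cross_edges by simp
qed

lemma rs_total_pos: "rs_total > 0"
  using finite_L L_nonempty rs_pos by (intro sum_pos) auto

lemma set_pmf_Reach: "set_pmf Reach \<subseteq> L"
proof (rule set_pmf_subset_if_sum_pmf_eq_1[OF finite_L])
  show "(\<Sum>v\<in>L. pmf Reach v) = 1"
    using rs_total_pos by (simp add: pmf_Reach flip: sum_divide_distrib)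
qed

lemma expectation_Reach:
  "measure_pmf.expectation Reach g = (\<Sum>v\<in>L. g v * rs v) / rs_total"
proof -
  have "measure_pmf.expectation Reach g = (\<Sum>v\<in>L. g v * pmf Reach v)"
    using set_pmf_Reach by (intro integral_measure_pmf_real[OF finite_L]) auto
  then show ?thesis
    by (simp add: pmf_Reach sum_divide_distrib)
qed

lemma prob_accurate_L1_sample:
  assumes "0 < \<epsilon>" "0 < C"
    and s1: "real s1 \<ge> C * max_of dp L1 / (\<epsilon>\<^sup>2 * avg_of dp L1)"
  shows "measure_pmf.prob (iid_pmf s1 (pmf_of_set L1)) (accurate_sample dp (avg_of dp L1) (\<epsilon> / 5) s1)
       \<ge> 1 - 25 / C"
proof -
  have avg_pos: "avg_of dp L1 > 0"
    using cross_edges_pos finite_L1 L1_nonempty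
    by (simp add: avg_of_def sum_dp_eq_cross_edges card_gt_0_iff)
  have "measure_pmf.prob (iid_pmf s1 (pmf_of_set L1)) (accurate_sample dp (avg_of dp L1) (\<epsilon> / 5) s1)
      \<ge> 1 - 1 / (C / 25)"
  proof (rule prob_accurate_sample_ge_bounded)
    show "finite (set_pmf (pmf_of_set L1))"
      using finite_L1 L1_nonempty by simp
    show "measure_pmf.expectation (pmf_of_set L1) dp = avg_of dp L1"
      using finite_L1 L1_nonempty by (simp add: integral_pmf_of_set avg_of_def)
    show "0 \<le> dp v \<and> dp v \<le> max_of dp L1" if "v \<in> set_pmf (pmf_of_set L1)" for v
      using that finite_L1 L1_nonempty max_of_ge[of L1 v dp] by simp
    show "real s1 \<ge> C / 25 * (max_of dp L1 / avg_of dp L1) / (\<epsilon> / 5)\<^sup>2"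
      using s1 by (simp add: power2_eq_square field_simps)
  qed (use assms avg_pos in simp_all)
  then show ?thesis by simp
qed

lemma prob_accurate_Reach_sample:
  assumes h: "\<And>v. v \<in> L \<Longrightarrow> 0 \<le> h v \<and> h v \<le> H" and sum_pos: "(\<Sum>v\<in>L. h v) > 0"
    and pos: "0 < \<eta>" "0 < C"
    and s2: "real s2 \<ge> C * (H / min_of rs L / ((\<Sum>v\<in>L. h v) / rs_total)) / \<eta>\<^sup>2"
  shows "measure_pmf.prob (iid_pmf s2 Reach)
           (accurate_sample (\<lambda>v. h v / rs v) ((\<Sum>v\<in>L. h v) / rs_total) \<eta> s2) \<ge> 1 - 1 / C"
proof (rule prob_accurate_sample_ge_bounded[OF _ _ _ _ pos s2])
  show "finite (set_pmf Reach)"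
    using set_pmf_Reach finite_L by (rule finite_subset)
  show "measure_pmf.expectation Reach (\<lambda>v. h v / rs v) = (\<Sum>v\<in>L. h v) / rs_total"
    using rs_pos by (simp add: expectation_Reach less_imp_neq[symmetric] cong: sum.cong)
  show "(\<Sum>v\<in>L. h v) / rs_total > 0"
    using sum_pos rs_total_pos by simp
  have min_pos: "0 < min_of rs L"
    using finite_L L_nonempty rs_pos by (rule min_of_pos)
  show "0 \<le> h v / rs v \<and> h v / rs v \<le> H / min_of rs L" if "v \<in> set_pmf Reach" for v
  proof -
    have v: "v \<in> L" using that set_pmf_Reach by blast
    then have "min_of rs L \<le> rs v" using finite_L by (rule min_of_le[rotated])
    then show ?thesis
      using h[OF v] rs_pos[OF v] min_pos by (auto intro: frac_le)
  qed
qed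

lemma periphery_estimate_accurate:
  assumes \<epsilon>: "0 < \<epsilon>" "\<epsilon> < 1"
    and S1: "S1 \<in> accurate_sample dp (avg_of dp L1) (\<epsilon> / 5) s1"
    and S2_dm: "S2 \<in> accurate_sample (\<lambda>v. dm v / rs v) (cross_edges / rs_total) (\<epsilon> / 5) s2"
    and S2_inv: "S2 \<in> accurate_sample (\<lambda>v. 1 / rs v) (real (card L) / rs_total) (\<epsilon> / 5) s2"
  shows "(1 - \<epsilon>) * real (card L) \<le> periphery_estimate V E L0 rs S1 S2
       \<and> periphery_estimate V E L0 rs S1 S2 \<le> (1 + \<epsilon>) * real (card L)"
proof -
  define a where "a = real (card L1)"
  define N where "N = real (card L)"
  define x0 where "x0 = real s1 * avg_of dp L1"
  define y0 where "y0 = real s2 * (cross_edges / rs_total)"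
  define z0 where "z0 = real s2 * (N / rs_total)"
  have a: "0 < a" and N: "0 < N"
    using finite_L1 L1_nonempty finite_L L_nonempty by (simp_all add: a_def N_def card_gt_0_iff)
  have avg: "avg_of dp L1 = cross_edges / a"
    by (simp add: avg_of_def a_def sum_dp_eq_cross_edges)
  have "0 < \<epsilon> / 5 * x0" "0 < \<epsilon> / 5 * y0" "0 < \<epsilon> / 5 * z0"
    using accurate_sample_pos[OF S1] accurate_sample_pos[OF S2_dm] accurate_sample_pos[OF S2_inv]
    by (simp_all add: x0_def y0_def z0_def N_def)
  then have pos: "0 < x0" "0 < y0" "0 < z0"
    using \<epsilon> by (simp_all add: zero_less_mult_iff)
  then have s1: "0 < real s1" and s2: "0 < real s2"
    using cross_edges_pos rs_total_pos a
    by (simp_all add: x0_def y0_def avg zero_less_mult_iff zero_less_divide_iff)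
  have "length S1 = s1" using S1 by (simp add: accurate_sample_def)
  then have estimate: "periphery_estimate V E L0 rs S1 S2
      = a / real s1 * ((\<Sum>v\<leftarrow>S1. dp v) * (\<Sum>v\<leftarrow>S2. 1 / rs v) / (\<Sum>v\<leftarrow>S2. dm v / rs v))"
    by (simp add: periphery_estimate_def Let_def a_def)
  have target: "x0 * z0 / y0 = real s1 * N / a"
    using s1 s2 cross_edges_pos rs_total_pos a by (simp add: x0_def y0_def z0_def avg field_simps)
  define w where "w = (\<Sum>v\<leftarrow>S1. dp v) * (\<Sum>v\<leftarrow>S2. 1 / rs v) / (\<Sum>v\<leftarrow>S2. dm v / rs v)"
  have bounds: "(1 - \<epsilon>) * (real s1 * N / a) \<le> w \<and> w \<le> (1 + \<epsilon>) * (real s1 * N / a)"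
    unfolding target[symmetric] w_def
    using S1 S2_dm S2_inv
    by (intro mult_divide_relative_error[OF \<epsilon> pos])
      (simp_all add: accurate_sample_def x0_def y0_def z0_def N_def)
  have "0 \<le> a / real s1" using a s1 by simp
  then have "a / real s1 * ((1 - \<epsilon>) * (real s1 * N / a)) \<le> a / real s1 * w
      \<and> a / real s1 * w \<le> a / real s1 * ((1 + \<epsilon>) * (real s1 * N / a))"
    using bounds by (blast intro: mult_left_mono)
  moreover have "a / real s1 * (c * (real s1 * N / a)) = c * N" for c
    using a s1 by simp
  ultimately show ?thesis
    by (simp add: estimate w_def N_def)
qed

lemma cross_edges_le: "cross_edges \<le> real (card L) * max_of dm L"
  using finite_L max_of_ge[of L _ dm] sum_bounded_above[of L dm "max_of dm L"] by simp

lemma prob_accurate_Reach_samples: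
  assumes \<epsilon>: "0 < \<epsilon>" and C: "0 < C"
    and s2: "real s2 \<ge> C * (avg_of rs L / min_of rs L) * max_of dm L / (\<epsilon>\<^sup>2 * avg_of dm L)"
  shows "measure_pmf.prob (iid_pmf s2 Reach)
           (accurate_sample (\<lambda>v. dm v / rs v) (cross_edges / rs_total) (\<epsilon> / 5) s2) \<ge> 1 - 25 / C"
    and "measure_pmf.prob (iid_pmf s2 Reach)
           (accurate_sample (\<lambda>v. 1 / rs v) (real (card L) / rs_total) (\<epsilon> / 5) s2) \<ge> 1 - 25 / C"
proof -
  define N where "N = real (card L)"
  have N: "0 < N" using finite_L L_nonempty by (simp add: N_def card_gt_0_iff)
  have min_pos: "0 < min_of rs L"
    using finite_L L_nonempty rs_pos by (rule min_of_pos)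
  have "1 / N \<le> max_of dm L / cross_edges"
    using cross_edges_le N cross_edges_pos by (simp add: N_def field_simps)
  then have "rs_total / min_of rs L * (1 / N) \<le> rs_total / min_of rs L * (max_of dm L / cross_edges)"
    using min_pos rs_total_pos by (intro mult_left_mono) auto
  then have "C / 25 * (1 / min_of rs L / (N / rs_total)) / (\<epsilon> / 5)\<^sup>2
      \<le> C / 25 * (max_of dm L / min_of rs L / (cross_edges / rs_total)) / (\<epsilon> / 5)\<^sup>2"
    using C by (intro divide_right_mono mult_left_mono) (auto simp: ac_simps)
  moreover have s2': "C / 25 * (max_of dm L / min_of rs L / (cross_edges / rs_total)) / (\<epsilon> / 5)\<^sup>2
      \<le> real s2"
    using s2 N by (simp add: avg_of_def N_def power2_eq_square field_simps)
  ultimately have s2_inv: "C / 25 * (1 / min_of rs L / (N / rs_total)) / (\<epsilon> / 5)\<^sup>2 \<le> real s2"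
    by linarith
  have dm_max: "0 \<le> dm v \<and> dm v \<le> max_of dm L" if "v \<in> L" for v
    using that finite_L max_of_ge[of L v dm] by simp
  show "measure_pmf.prob (iid_pmf s2 Reach)
      (accurate_sample (\<lambda>v. dm v / rs v) (cross_edges / rs_total) (\<epsilon> / 5) s2) \<ge> 1 - 25 / C"
    using prob_accurate_Reach_sample[OF dm_max cross_edges_pos _ _ s2'] \<epsilon> C by simp
  show "measure_pmf.prob (iid_pmf s2 Reach)
      (accurate_sample (\<lambda>v. 1 / rs v) (real (card L) / rs_total) (\<epsilon> / 5) s2) \<ge> 1 - 25 / C"
  proof -
    have "1 - 1 / (C / 25) \<le> measure_pmf.prob (iid_pmf s2 Reach)
        (accurate_sample (\<lambda>v. 1 / rs v) ((\<Sum>v\<in>L. 1) / rs_total) (\<epsilon> / 5) s2)"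
      using N \<epsilon> C s2_inv by (intro prob_accurate_Reach_sample[where H = 1]) (simp_all add: N_def)
    then show ?thesis by simp
  qed
qed

lemma prob_periphery_estimate_accurate:
  assumes \<epsilon>: "0 < \<epsilon>" "\<epsilon> < 1" and C: "0 < C"
    and s1: "real s1 \<ge> C * max_of dp L1 / (\<epsilon>\<^sup>2 * avg_of dp L1)"
    and s2: "real s2 \<ge> C * (avg_of rs L / min_of rs L) * max_of dm L / (\<epsilon>\<^sup>2 * avg_of dm L)"
  shows "measure_pmf.prob (pair_pmf (iid_pmf s1 (pmf_of_set L1)) (iid_pmf s2 Reach))
           {(S1, S2). (1 - \<epsilon>) * real (card L) \<le> periphery_estimate V E L0 rs S1 S2
                    \<and> periphery_estimate V E L0 rs S1 S2 \<le> (1 + \<epsilon>) * real (card L)}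
         \<ge> 1 - 75 / C" (is "_ \<le> measure_pmf.prob ?P ?good")
proof -
  let ?A = "accurate_sample dp (avg_of dp L1) (\<epsilon> / 5) s1"
  let ?B_dm = "accurate_sample (\<lambda>v. dm v / rs v) (cross_edges / rs_total) (\<epsilon> / 5) s2"
  let ?B_inv = "accurate_sample (\<lambda>v. 1 / rs v) (real (card L) / rs_total) (\<epsilon> / 5) s2"
  have "1 - 75 / C \<le> measure_pmf.prob ?P (?A \<times> (?B_dm \<inter> ?B_inv))"
    using prob_pair_pmf_Times_ge[where p = "iid_pmf s1 (pmf_of_set L1)" and q = "iid_pmf s2 Reach"
        and A = ?A and B = "?B_dm \<inter> ?B_inv"]
      prob_Int_ge[of "iid_pmf s2 Reach" ?B_dm ?B_inv]
      prob_accurate_L1_sample[OF \<epsilon>(1) C s1] prob_accurate_Reach_samples[OF \<epsilon>(1) C s2]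
    by linarith
  also have "\<dots> \<le> measure_pmf.prob ?P ?good"
    using periphery_estimate_accurate[OF \<epsilon>]
    by (intro measure_pmf.finite_measure_mono) auto
  finally show ?thesis .
qed

end

theorem theoremA2:
  "\<forall>\<delta>::real. 0 < \<delta> \<and> \<delta> < 1 \<longrightarrow>
    (\<exists>C::real. C > 0 \<and>
      (\<forall>(V::'a set) E L0 (rs::'a \<Rightarrow> real) (Reach::'a pmf) (\<epsilon>::real) (s1::nat) (s2::nat).
         finite V \<and> (\<forall>u v. E u v \<longrightarrow> u \<in> V \<and> v \<in> V) \<and> (\<forall>u v. E u v \<longrightarrow> E v u)
         \<and> (\<forall>v. \<not> E v v) \<and> L0 \<subseteq> V \<and> layer2 V E L0 \<noteq> {}
         \<and> (\<forall>v\<in>layer_ge2 V E L0. rs v > 0)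
         \<and> (\<forall>v\<in>layer_ge2 V E L0. pmf Reach v = rs v / (\<Sum>u\<in>layer_ge2 V E L0. rs u))
         \<and> 0 < \<epsilon> \<and> \<epsilon> < 1
         \<and> real s1 \<ge> C * max_of (\<lambda>v. real (dplus V E L0 v)) (layer1 V E L0)
                     / (\<epsilon>^2 * avg_of (\<lambda>v. real (dplus V E L0 v)) (layer1 V E L0))
         \<and> real s2 \<ge> C * (avg_of rs (layer_ge2 V E L0) / min_of rs (layer_ge2 V E L0))
                     * max_of (\<lambda>v. real (dminus V E L0 v)) (layer_ge2 V E L0)
                     / (\<epsilon>^2 * avg_of (\<lambda>v. real (dminus V E L0 v)) (layer_ge2 V E L0))
         \<longrightarrow>
         measure_pmf.prob (pair_pmf (iid_pmf s1 (pmf_of_set (layer1 V E L0))) (iid_pmf s2 Reach))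
           {(S1, S2). (1 - \<epsilon>) * real (card (layer_ge2 V E L0))
                        \<le> periphery_estimate V E L0 rs S1 S2
                      \<and> periphery_estimate V E L0 rs S1 S2
                        \<le> (1 + \<epsilon>) * real (card (layer_ge2 V E L0))}
           \<ge> 1 - \<delta>))"
  apply (intro allI impI)
  subgoal for \<delta>
    apply (rule exI[of _ "75 / \<delta>"], intro conjI allI impI)
    subgoal by simp
    subgoal premises H for V E L0 rs Reach \<epsilon> s1 s2
    proof -
      interpret periphery_sampling V E L0 rs Reach
        using H by unfold_locales auto
      show ?thesis
        using prob_periphery_estimate_accurate[of \<epsilon> "75 / \<delta>" s1 s2] H by simp
    qed
    done
  done

end
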